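(* Let $\Sigma:\ \dot x=-(A-M)x+d$ be $\gamma$-robust for some $\gamma>0$ and let $u=(A-M)^{-1}\mathbb{1}$. Let $a_{N+1}>0$ and define $\bar A=\begin{bmatrix}A&0\\0&a_{N+1}\end{bmatrix}$, $\bar M=\begin{bmatrix}M&0\\0&0\end{bmatrix}$ (adding node $N+1$ with no incoming or outgoing edges). Then the change $\Sigma\mapsto\bar\Sigma:\ \dot{\bar x}=-(\bar A-\bar M)\bar x+\bar d$ is scalable if and only if $a_{N+1}\ge\big(\max_{i\in\{1,\dots,N\}}u_i\big)^{-1}$.
   Context: $A=\mathrm{diag}(a_1,\dots,a_N)$ with all $a_i>0$, $M\in\mathbb{R}^{N\times N}$ has zero diagonal and nonnegative off-diagonal entries; $\mathbb{1}$ is the all-ones vector. For $\gamma>0$, a system $\dot x=-(A-M)x+d$ is $\gamma$-robust if $-(A-M)$ is Hurwitz and for every bounded disturbance $d$, the solution with $x(0)=0$ satisfies $\max_{i}|x_i(t)|\le\gamma\max_i\sup_{s\ge0}|d_i(s)|$ for all $t\ge0$. A structural change $\Sigma\mapsto\bar\Sigma$ is called scalable if, for every $\gamma>0$ for which $\Sigma$ is $\gamma$-robust, $\bar\Sigma$ is $\gamma$-robust. *)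

theory Defs
  imports "HOL-Analysis.Analysis" "Jordan_Normal_Form.Matrix" "Jordan_Normal_Form.Char_Poly"
begin

text \<open>Matrices of varying size N are Jordan_Normal_Form matrices (type real mat),
  vectors are real vec; indices are 0-based (i < N).\<close>

definition hurwitz :: "real mat \<Rightarrow> bool" where
  "hurwitz B \<longleftrightarrow> (\<forall>z. eigenvalue (map_mat complex_of_real B) z \<longrightarrow> Re z < 0)"

definition is_solution ::
  "nat \<Rightarrow> real mat \<Rightarrow> (real \<Rightarrow> real vec) \<Rightarrow> (real \<Rightarrow> real vec) \<Rightarrow> bool" where
  "is_solution n F d x \<longleftrightarrow>
     (\<forall>t. dim_vec (x t) = n) \<and> x 0 = 0\<^sub>v n \<and>
     (\<forall>t\<ge>0. \<forall>i<n. ((\<lambda>s. x s $ i) has_real_derivative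
                         (- (F *\<^sub>v x t) $ i + d t $ i)) (at t within {0..}))"

definition bounded_disturbance :: "nat \<Rightarrow> (real \<Rightarrow> real vec) \<Rightarrow> bool" where
  "bounded_disturbance n d \<longleftrightarrow>
     (\<forall>i<n. continuous_on {0..} (\<lambda>t. d t $ i)) \<and> (\<exists>K. \<forall>t\<ge>0. \<forall>i<n. \<bar>d t $ i\<bar> \<le> K)"

definition gamma_robust :: "nat \<Rightarrow> real mat \<Rightarrow> real \<Rightarrow> bool" where
  "gamma_robust n F \<gamma> \<longleftrightarrow>
     hurwitz (- F) \<and>
     (\<forall>d x. bounded_disturbance n d \<longrightarrow> is_solution n F d x \<longrightarrow>
        (\<forall>t\<ge>0. \<forall>i<n. \<bar>x t $ i\<bar> \<le> \<gamma> * Max ((\<lambda>j. SUP s\<in>{0..}. \<bar>d s $ j\<bar>) ` {..<n})))"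

definition scalable :: "nat \<Rightarrow> real mat \<Rightarrow> nat \<Rightarrow> real mat \<Rightarrow> bool" where
  "scalable n F n' F' \<longleftrightarrow> (\<forall>\<gamma>>0. gamma_robust n F \<gamma> \<longrightarrow> gamma_robust n' F' \<gamma>)"

end

theory Submission
  imports Defs "HOL-Real_Asymp.Real_Asymp"
begin

text \<open>For a Z-matrix \<open>F\<close> (so that \<open>-F\<close> is Metzler) with \<open>-F\<close> Hurwitz and \<open>F w = \<one>\<close>,
  the system \<open>x' = -F x + d\<close> is \<open>\<gamma>\<close>-robust exactly when \<open>\<gamma> \<ge> max\<^sub>i w\<^sub>i\<close>.
  Sufficiency is a comparison argument: the state cannot leave the box
  \<open>|x\<^sub>i| < (\<parallel>d\<parallel> + \<epsilon>) w\<^sub>i\<close>, because on its boundary the off-diagonal signs of \<open>F\<close> make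
  the vector field point inwards. Necessity comes from a disturbance with \<open>\<parallel>d\<parallel> \<le> 1\<close> that
  drives the state along the ray through \<open>w\<close> towards \<open>w\<close>. Positivity of \<open>w\<close> follows by
  continuation from \<open>(F + s I)\<^sup>-\<^sup>1 \<one>\<close> for large \<open>s\<close>: its least component never vanishes
  for \<open>s \<ge> 0\<close>, as \<open>F + s I\<close> stays nonsingular.

  Adding an isolated node with rate \<open>a\<^sub>N\<^sub>+\<^sub>1\<close> keeps the Hurwitz property and appends the
  component \<open>1 / a\<^sub>N\<^sub>+\<^sub>1\<close> to \<open>u\<close>, so the smallest admissible \<open>\<gamma>\<close> stays \<open>max\<^sub>i u\<^sub>i\<close> precisely when
  \<open>1 / a\<^sub>N\<^sub>+\<^sub>1 \<le> max\<^sub>i u\<^sub>i\<close>.\<close>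

definition Z_matrix :: "real mat \<Rightarrow> bool" where
  "Z_matrix F \<longleftrightarrow> (\<forall>i<dim_row F. \<forall>j<dim_col F. i \<noteq> j \<longrightarrow> F $$ (i, j) \<le> 0)"

definition peak :: "nat \<Rightarrow> (real \<Rightarrow> real vec) \<Rightarrow> real" where
  "peak n d = Max ((\<lambda>j. SUP s\<in>{0..}. \<bar>d s $ j\<bar>) ` {..<n})"

lemmas gamma_robust_peak_def = gamma_robust_def[folded peak_def]

lemma mult_mat_vec_index_sum:
  fixes F :: "'a::comm_semiring_0 mat"
  assumes "F \<in> carrier_mat n n" "v \<in> carrier_vec n" "i < n"
  shows "(F *\<^sub>v v) $ i = (\<Sum>j<n. F $$ (i, j) * v $ j)"
  using assms by (auto simp: scalar_prod_def row_def atLeast0LessThan intro!: sum.cong)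

lemma continuous_on_Min_image:
  fixes f :: "'i \<Rightarrow> 'a::topological_space \<Rightarrow> real"
  assumes "finite I" "I \<noteq> {}" "\<And>i. i \<in> I \<Longrightarrow> continuous_on S (f i)"
  shows "continuous_on S (\<lambda>t. Min ((\<lambda>i. f i t) ` I))"
  using assms
proof (induction I rule: finite_ne_induct)
  case (insert x I)
  then have "continuous_on S (\<lambda>t. min (f x t) (Min ((\<lambda>i. f i t) ` I)))"
    by (intro continuous_on_min) auto
  with insert show ?case by (simp add: Min_insert)
qed simp

lemma continuous_on_det:
  fixes B :: "'a::topological_space \<Rightarrow> real mat"
  assumes "\<And>s. B s \<in> carrier_mat n n"
    and "\<And>i j. i < n \<Longrightarrow> j < n \<Longrightarrow> continuous_on S (\<lambda>s. B s $$ (i, j))"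
  shows "continuous_on S (\<lambda>s. det (B s))"
proof -
  have "continuous_on S (\<lambda>s. \<Sum>p\<in>{p. p permutes {0..<n}}. signof p * (\<Prod>i = 0..<n. B s $$ (i, p i)))"
  proof (intro continuous_on_sum continuous_on_mult continuous_on_const continuous_on_prod)
    fix p i assume "p \<in> {p. p permutes {0..<n}}" "i \<in> {0..<n}"
    then show "continuous_on S (\<lambda>s. B s $$ (i, p i))"
      using assms(2) permutes_in_image by fastforce
  qed
  then show ?thesis using det_def'[OF assms(1)] by simp
qed

lemma first_zero_of_continuous:
  fixes f :: "real \<Rightarrow> real"
  assumes cont: "continuous_on {0..} f" and f0: "f 0 > 0" and t1: "t1 \<ge> 0" "f t1 \<le> 0"
  obtains \<tau> where "\<tau> > 0" "f \<tau> = 0" "\<And>t. 0 \<le> t \<Longrightarrow> t < \<tau> \<Longrightarrow> f t > 0"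
proof -
  have zero_before: "\<exists>x. 0 \<le> x \<and> x \<le> t \<and> f x = 0" if "0 \<le> t" "f t \<le> 0" for t
    using IVT2'[of f t 0 0] continuous_on_subset[OF cont] f0 that by force
  define S where "S = {t\<in>{0..t1}. f t = 0}"
  have "S \<noteq> {}" using zero_before[OF t1] by (auto simp: S_def)
  moreover have "bdd_below S" by (auto simp: S_def intro: bdd_belowI[of _ 0])
  moreover have "closed S"
    unfolding S_def by (rule continuous_closed_preimage_constant) (auto intro: continuous_on_subset[OF cont])
  ultimately have "Inf S \<in> S" by (rule closed_contains_Inf)
  then have \<tau>: "0 \<le> Inf S" "Inf S \<le> t1" "f (Inf S) = 0" by (auto simp: S_def)
  have before: "f t > 0" if t: "0 \<le> t" "t < Inf S" for t
  proof (rule ccontr)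
    assume "\<not> f t > 0"
    then obtain x where "0 \<le> x" "x \<le> t" "f x = 0" using zero_before t by force
    then have "x \<in> S" using t \<tau> by (auto simp: S_def)
    then show False using cInf_lower[OF _ \<open>bdd_below S\<close>] \<open>x \<le> t\<close> t by force
  qed
  have "Inf S \<noteq> 0" using \<tau>(3) f0 by auto
  then show thesis using \<tau> by (intro that[of "Inf S"] before) auto
qed

lemma positive_invariance:
  fixes z z' :: "real \<Rightarrow> nat \<Rightarrow> real"
  assumes z0: "\<And>i. i < n \<Longrightarrow> z 0 i > 0"
    and der: "\<And>t i. t \<ge> 0 \<Longrightarrow> i < n \<Longrightarrow> ((\<lambda>s. z s i) has_real_derivative z' t i) (at t within {0..})"
    and inward: "\<And>t i. t \<ge> 0 \<Longrightarrow> i < n \<Longrightarrow> z t i = 0 \<Longrightarrow> (\<forall>j<n. z t j \<ge> 0) \<Longrightarrow> z' t i > 0"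
    and t: "t \<ge> 0" and i: "i < n"
  shows "z t i > 0"
proof (rule ccontr)
  assume "\<not> z t i > 0"
  define m where "m s = Min ((\<lambda>j. z s j) ` {..<n})" for s
  have m_le: "m s \<le> z s j" if "j < n" for s j unfolding m_def using that by auto
  have m_attained: "\<exists>j<n. z s j = m s" for s
    unfolding m_def using i Min_in[of "(\<lambda>j. z s j) ` {..<n}"] by fastforce
  have cont: "continuous_on {0..} m"
    unfolding m_def using i der
    by (intro continuous_on_Min_image[where f = "\<lambda>j s. z s j"]) (auto intro!: DERIV_continuous_on)
  have m0: "m 0 > 0" using m_attained[of 0] z0 by force
  have "m t \<le> 0" using m_le[OF i, of t] \<open>\<not> z t i > 0\<close> by simp
  then obtain \<tau> where \<tau>: "\<tau> > 0" "m \<tau> = 0" and before: "\<And>s. 0 \<le> s \<Longrightarrow> s < \<tau> \<Longrightarrow> m s > 0"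
    using first_zero_of_continuous[OF cont m0 t] by blast
  obtain k where k: "k < n" "z \<tau> k = 0" using m_attained[of \<tau>] \<tau>(2) by auto
  have "z' \<tau> k > 0" using inward[OF _ k] \<tau> m_le[of _ \<tau>] by (simp add: less_imp_le)
  moreover have "((\<lambda>s. z s k) has_real_derivative z' \<tau> k) (at \<tau>)"
  proof -
    have "((\<lambda>s. z s k) has_real_derivative z' \<tau> k) (at \<tau> within {0<..})"
      using der[OF _ k(1), of \<tau>] \<tau>(1) by (auto intro: has_field_derivative_subset)
    then show ?thesis using \<tau>(1) at_within_open[of \<tau> "{0<..}"] by simp
  qed
  ultimately obtain h where "h > 0" "\<And>e. e > 0 \<Longrightarrow> e < h \<Longrightarrow> z (\<tau> - e) k < z \<tau> k"
    using DERIV_pos_inc_left by blast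
  then have "z (\<tau> - min (h/2) (\<tau>/2)) k < 0" using \<tau>(1) k(2) by simp
  moreover have "m (\<tau> - min (h/2) (\<tau>/2)) > 0" using before \<tau>(1) \<open>h > 0\<close> by simp
  ultimately show False using m_le[OF k(1)] by (meson less_le_trans less_asym)
qed

lemma abs_le_peak:
  fixes d :: "real \<Rightarrow> real vec"
  assumes "bounded_disturbance n d" "t \<ge> 0" "j < n"
  shows "\<bar>d t $ j\<bar> \<le> peak n d"
proof -
  obtain K where "\<forall>t\<ge>0. \<forall>i<n. \<bar>d t $ i\<bar> \<le> K"
    using assms(1) unfolding bounded_disturbance_def by auto
  then have "bdd_above ((\<lambda>s. \<bar>d s $ j\<bar>) ` {0..})"
    using assms(3) by (intro bdd_aboveI2[of _ _ K]) auto
  then have "\<bar>d t $ j\<bar> \<le> (SUP s\<in>{0..}. \<bar>d s $ j\<bar>)"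
    using assms(2) by (intro cSUP_upper) auto
  also have "\<dots> \<le> peak n d"
    unfolding peak_def using assms(3) by (intro Max_ge) auto
  finally show ?thesis .
qed

lemma peak_le:
  fixes d :: "real \<Rightarrow> real vec"
  assumes "n > 0" and "\<And>t j. t \<ge> 0 \<Longrightarrow> j < n \<Longrightarrow> \<bar>d t $ j\<bar> \<le> K"
  shows "peak n d \<le> K"
  unfolding peak_def using assms by (subst Max_le_iff) (auto intro!: cSUP_least)

lemma solution_lt_scaled_positive_solution:
  fixes F :: "real mat" and w :: "real vec"
  assumes F: "F \<in> carrier_mat n n" "Z_matrix F"
    and w: "w \<in> carrier_vec n" "\<And>j. j < n \<Longrightarrow> w $ j > 0" "F *\<^sub>v w = vec n (\<lambda>_. 1)"
    and d: "bounded_disturbance n d" and x: "is_solution n F d x"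
    and \<sigma>: "\<bar>\<sigma>\<bar> = 1" and \<epsilon>: "\<epsilon> > 0" and t: "t \<ge> 0" and i: "i < n"
  shows "\<sigma> * x t $ i < (peak n d + \<epsilon>) * w $ i"
proof -
  let ?D = "peak n d + \<epsilon>"
  have x_dim: "x s \<in> carrier_vec n" for s using x unfolding is_solution_def carrier_vec_def by auto
  define z where "z s j = ?D * w $ j - \<sigma> * x s $ j" for s j
  define z' where "z' s j = - \<sigma> * (- (F *\<^sub>v x s) $ j + d s $ j)" for s j
  have "z t i > 0"
  proof (rule positive_invariance[OF _ _ _ t i])
    fix j assume j: "j < n"
    have "?D > 0" using abs_le_peak[OF d order_refl j] \<epsilon> by linarith
    with w(2)[OF j] x j show "z 0 j > 0" by (simp add: z_def is_solution_def)
  next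
    fix s :: real and j assume "s \<ge> 0" "j < n"
    with x have "((\<lambda>s. x s $ j) has_real_derivative - (F *\<^sub>v x s) $ j + d s $ j) (at s within {0..})"
      unfolding is_solution_def by blast
    then show "((\<lambda>s. z s j) has_real_derivative z' s j) (at s within {0..})"
      unfolding z_def z'_def by (auto intro!: derivative_eq_intros)
  next
    fix s :: real and j assume s: "s \<ge> 0" and j: "j < n" and zj: "z s j = 0" and zs: "\<forall>l<n. z s l \<ge> 0"
    have "(\<Sum>l<n. F $$ (j, l) * z s l) \<le> 0"
    proof (rule sum_nonpos)
      fix l assume "l \<in> {..<n}"
      then show "F $$ (j, l) * z s l \<le> 0"
        using F j zj zs by (cases "l = j") (auto simp: Z_matrix_def intro: mult_nonpos_nonneg)
    qed
    moreover have "\<sigma> * (F *\<^sub>v x s) $ j = ?D * (F *\<^sub>v w) $ j - (\<Sum>l<n. F $$ (j, l) * z s l)"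
      unfolding mult_mat_vec_index_sum[OF F(1) x_dim j] mult_mat_vec_index_sum[OF F(1) w(1) j]
      by (simp add: z_def sum_distrib_left sum_subtractf algebra_simps)
    moreover have "\<sigma> * d s $ j \<le> peak n d"
      using abs_le_peak[OF d s j] \<sigma> by (metis abs_mult abs_ge_self mult_1 order_trans)
    ultimately show "z' s j > 0" using w(3) j \<epsilon> by (simp add: z'_def algebra_simps)
  qed
  then show ?thesis by (simp add: z_def)
qed

lemma abs_solution_le_peak:
  fixes F :: "real mat" and w :: "real vec"
  assumes F: "F \<in> carrier_mat n n" "Z_matrix F"
    and w: "w \<in> carrier_vec n" "\<And>j. j < n \<Longrightarrow> w $ j > 0" "F *\<^sub>v w = vec n (\<lambda>_. 1)"
    and d: "bounded_disturbance n d" and x: "is_solution n F d x"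
    and t: "t \<ge> 0" and i: "i < n"
  shows "\<bar>x t $ i\<bar> \<le> w $ i * peak n d"
proof -
  have "\<sigma> * x t $ i \<le> peak n d * w $ i" if \<sigma>: "\<bar>\<sigma>\<bar> = 1" for \<sigma>
  proof (rule field_le_epsilon)
    fix e :: real assume "e > 0"
    then have "\<sigma> * x t $ i < (peak n d + e / w $ i) * w $ i"
      using w(2)[OF i] by (intro solution_lt_scaled_positive_solution[OF F w d x \<sigma> _ t i]) auto
    also have "\<dots> = peak n d * w $ i + e"
      using w(2)[OF i] by (simp add: field_simps)
    finally show "\<sigma> * x t $ i \<le> peak n d * w $ i + e" by simp
  qed
  from this[of 1] this[of "-1"] show ?thesis by (simp add: abs_le_iff mult.commute)
qed

lemma gamma_robust_if_positive_solution_le: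
  fixes F :: "real mat" and w :: "real vec"
  assumes F: "F \<in> carrier_mat n n" "Z_matrix F" and hurwitz: "hurwitz (- F)"
    and w: "w \<in> carrier_vec n" "\<And>j. j < n \<Longrightarrow> w $ j > 0" "F *\<^sub>v w = vec n (\<lambda>_. 1)"
    and le: "\<And>j. j < n \<Longrightarrow> w $ j \<le> \<gamma>"
  shows "gamma_robust n F \<gamma>"
  unfolding gamma_robust_peak_def
proof (intro conjI hurwitz allI impI)
  fix d x t i assume d: "bounded_disturbance n d" and x: "is_solution n F d x"
    and t: "(t::real) \<ge> 0" and i: "i < n"
  have "\<bar>x t $ i\<bar> \<le> w $ i * peak n d" by (rule abs_solution_le_peak[OF F w d x t i])
  also have "\<dots> \<le> \<gamma> * peak n d"
    using le[OF i] abs_le_peak[OF d order_refl i] by (intro mult_right_mono) auto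
  finally show "\<bar>x t $ i\<bar> \<le> \<gamma> * peak n d" .
qed

lemma is_solution_ray:
  fixes F :: "real mat" and w :: "real vec"
  assumes F: "F \<in> carrier_mat n n" and w: "w \<in> carrier_vec n" "F *\<^sub>v w = vec n (\<lambda>_. 1)"
  shows "is_solution n F (\<lambda>t. vec n (\<lambda>j. c * exp (- c * t) * w $ j + (1 - exp (- c * t))))
                         (\<lambda>t. (1 - exp (- c * t)) \<cdot>\<^sub>v w)"
  unfolding is_solution_def
proof (intro conjI allI impI)
  show "(1 - exp (- c * 0)) \<cdot>\<^sub>v w = 0\<^sub>v n" using w(1) by auto
next
  fix t :: real and j assume "j < n"
  moreover have "(F *\<^sub>v ((1 - exp (- c * t)) \<cdot>\<^sub>v w)) $ j = 1 - exp (- c * t)"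
    using \<open>j < n\<close> w by (simp add: mult_mat_vec[OF F w(1)])
  ultimately show "((\<lambda>s. ((1 - exp (- c * s)) \<cdot>\<^sub>v w) $ j) has_real_derivative
      - (F *\<^sub>v ((1 - exp (- c * t)) \<cdot>\<^sub>v w)) $ j
      + vec n (\<lambda>j. c * exp (- c * t) * w $ j + (1 - exp (- c * t))) $ j) (at t within {0..})"
    using w(1) by (auto intro!: derivative_eq_intros)
qed (use w(1) in auto)

lemma gamma_robust_imp_solution_le:
  fixes F :: "real mat" and w :: "real vec"
  assumes F: "F \<in> carrier_mat n n" and w: "w \<in> carrier_vec n" "F *\<^sub>v w = vec n (\<lambda>_. 1)"
    and robust: "gamma_robust n F \<gamma>" and \<gamma>: "\<gamma> \<ge> 0" and i: "i < n"
  shows "\<bar>w $ i\<bar> \<le> \<gamma>"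
proof -
  define c where "c = 1 / (1 + (\<Sum>j<n. \<bar>w $ j\<bar>))"
  have abs_sum: "(\<Sum>j<n. \<bar>w $ j\<bar>) \<ge> 0" by (simp add: sum_nonneg)
  then have c: "c > 0" by (simp add: c_def add_pos_nonneg)
  have cw: "c * \<bar>w $ j\<bar> \<le> 1" if "j < n" for j
  proof -
    have "\<bar>w $ j\<bar> \<le> (\<Sum>j<n. \<bar>w $ j\<bar>)" using that by (intro member_le_sum) auto
    then show ?thesis using abs_sum by (simp add: c_def field_simps)
  qed
  define d where "d t = vec n (\<lambda>j. c * exp (- c * t) * w $ j + (1 - exp (- c * t)))" for t
  define x where "x t = (1 - exp (- c * t)) \<cdot>\<^sub>v w" for t
  have d_le: "\<bar>d t $ j\<bar> \<le> 1" if t: "t \<ge> 0" and j: "j < n" for t j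
  proof -
    define E where "E = exp (- c * t)"
    have E: "0 < E" "E \<le> 1" using c t by (auto simp: E_def)
    have "\<bar>c * w $ j\<bar> \<le> 1" using cw[OF j] c by (simp add: abs_mult)
    then have y: "0 \<le> 1 - c * w $ j" "1 - c * w $ j \<le> 2" by (auto simp: abs_le_iff)
    have "E * (1 - c * w $ j) \<le> 1 * (1 - c * w $ j)" using E y by (intro mult_right_mono) auto
    moreover have "0 \<le> E * (1 - c * w $ j)" using E y by simp
    moreover have "d t $ j = 1 - E * (1 - c * w $ j)" using j by (simp add: d_def E_def algebra_simps)
    ultimately show ?thesis using y by (simp add: abs_le_iff)
  qed
  have d: "bounded_disturbance n d"
    unfolding bounded_disturbance_def d_def using d_le[unfolded d_def]
    by (auto intro!: continuous_intros)
  have "(1 - exp (- c * t)) * \<bar>w $ i\<bar> \<le> \<gamma>" if t: "t \<ge> 0" for t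
  proof -
    have "\<bar>x t $ i\<bar> \<le> \<gamma> * peak n d"
      using robust d is_solution_ray[OF F w, of c] t i
      unfolding gamma_robust_peak_def d_def x_def by blast
    also have "\<dots> \<le> \<gamma>" using peak_le[of n d 1] d_le i \<gamma> by (simp add: mult_left_le)
    finally show ?thesis using c t i w(1) by (simp add: x_def abs_mult)
  qed
  moreover have "((\<lambda>t. (1 - exp (- c * t)) * \<bar>w $ i\<bar>) \<longlongrightarrow> \<bar>w $ i\<bar>) at_top"
    using c by real_asymp
  ultimately show ?thesis
    by (intro tendsto_le[OF _ tendsto_const]) (auto intro: eventually_at_top_linorderI[of 0])
qed

lemma hurwitz_imp_det_shift_nonzero:
  fixes F :: "real mat"
  assumes F: "F \<in> carrier_mat n n" and hurwitz: "hurwitz (- F)" and s: "s \<ge> 0"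
  shows "det (F + s \<cdot>\<^sub>m 1\<^sub>m n) \<noteq> 0"
proof
  assume "det (F + s \<cdot>\<^sub>m 1\<^sub>m n) = 0"
  moreover have "char_matrix (- F) s = - (F + s \<cdot>\<^sub>m 1\<^sub>m n)"
    using F by (auto simp: char_matrix_def intro!: eq_matI)
  ultimately have "eigenvalue (- F) s"
    using F by (simp add: eigenvalue_det[of _ n] det_0_negate[of _ n])
  then have "eigenvalue (map_mat complex_of_real (- F)) (complex_of_real s)"
    using F by (intro of_real_hom.eigenvalue_hom[of _ n]) auto
  then show False using hurwitz s unfolding hurwitz_def by fastforce
qed

lemma hurwitz_four_block_diag:
  assumes A: "A \<in> carrier_mat n n" and D: "D \<in> carrier_mat m m"
    and "hurwitz A" "hurwitz D"
  shows "hurwitz (four_block_mat A (0\<^sub>m n m) (0\<^sub>m m n) D)"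
  unfolding hurwitz_def
proof (intro allI impI)
  fix z assume ev: "eigenvalue (map_mat complex_of_real (four_block_mat A (0\<^sub>m n m) (0\<^sub>m m n) D)) z"
  let ?A = "map_mat complex_of_real A" and ?D = "map_mat complex_of_real D"
  have "map_mat complex_of_real (four_block_mat A (0\<^sub>m n m) (0\<^sub>m m n) D)
      = four_block_mat ?A (0\<^sub>m n m) (0\<^sub>m m n) ?D"
    using A D by (auto intro!: eq_matI)
  moreover have "char_matrix (four_block_mat ?A (0\<^sub>m n m) (0\<^sub>m m n) ?D) z
      = four_block_mat (char_matrix ?A z) (0\<^sub>m n m) (0\<^sub>m m n) (char_matrix ?D z)"
    using A D by (auto simp: char_matrix_def intro!: eq_matI)
  ultimately have "det (char_matrix ?A z) * det (char_matrix ?D z) = 0"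
    using ev A D by (simp add: eigenvalue_det[of _ "n + m"] det_four_block_mat_upper_right_zero[of _ n _ m])
  then have "eigenvalue ?A z \<or> eigenvalue ?D z"
    using A D by (simp add: eigenvalue_det[of _ n] eigenvalue_det[of _ m])
  then show "Re z < 0" using assms(3,4) unfolding hurwitz_def by blast
qed

lemma hurwitz_1x1:
  assumes "c < 0"
  shows "hurwitz (mat 1 1 (\<lambda>_. c))"
  unfolding hurwitz_def
proof (intro allI impI)
  fix z assume "eigenvalue (map_mat complex_of_real (mat 1 1 (\<lambda>_. c))) z"
  moreover have "char_matrix (map_mat complex_of_real (mat 1 1 (\<lambda>_. c))) z = mat 1 1 (\<lambda>_. c - z)"
    by (auto simp: char_matrix_def intro!: eq_matI)
  moreover have "det (mat 1 1 (\<lambda>_. c - z)) = c - z"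
    by (subst det_upper_triangular[of _ 1]) (auto simp: upper_triangular_def diag_mat_def)
  ultimately have "z = complex_of_real c" by (simp add: eigenvalue_det[of _ 1])
  with assms show "Re z < 0" by simp
qed

lemma cramer_solution:
  fixes A :: "'a::field mat"
  assumes A: "A \<in> carrier_mat n n" "det A \<noteq> 0" and b: "b \<in> carrier_vec n"
  shows "A *\<^sub>v vec n (\<lambda>k. det (replace_col A b k) / det A) = b"
proof -
  obtain B where B: "B \<in> carrier_mat n n" "A * B = 1\<^sub>m n"
    using det_non_zero_imp_unit[OF A] unfolding Units_def ring_mat_def by auto
  define x where "x = B *\<^sub>v b"
  have x: "x \<in> carrier_vec n" using B b by (simp add: x_def)
  have Ax: "A *\<^sub>v x = b"
    using A B b by (simp add: x_def assoc_mult_mat_vec[symmetric, of _ n n _ n])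
  have "vec n (\<lambda>k. det (replace_col A b k) / det A) = x"
    using cramer_lemma_mat[OF A(1) x] A(2) x by (intro eq_vecI) (auto simp: Ax)
  with Ax show ?thesis by simp
qed

lemma continuous_on_cramer_shift:
  fixes F :: "real mat"
  assumes F: "F \<in> carrier_mat n n" and b: "b \<in> carrier_vec n" and k: "k < n"
    and det: "\<And>s. s \<in> S \<Longrightarrow> det (F + s \<cdot>\<^sub>m 1\<^sub>m n) \<noteq> 0"
  shows "continuous_on S (\<lambda>s. det (replace_col (F + s \<cdot>\<^sub>m 1\<^sub>m n) b k) / det (F + s \<cdot>\<^sub>m 1\<^sub>m n))"
proof (intro continuous_on_divide continuous_on_det ballI det)
  show "F + s \<cdot>\<^sub>m 1\<^sub>m n \<in> carrier_mat n n" "replace_col (F + s \<cdot>\<^sub>m 1\<^sub>m n) b k \<in> carrier_mat n n" for s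
    using F by (auto simp: replace_col_def)
  fix i j assume ij: "i < n" "j < n"
  then have "(F + s \<cdot>\<^sub>m 1\<^sub>m n) $$ (i, j) = F $$ (i, j) + of_bool (i = j) * s"
    and "replace_col (F + s \<cdot>\<^sub>m 1\<^sub>m n) b k $$ (i, j)
           = (if j = k then b $ i else F $$ (i, j) + of_bool (i = j) * s)"
    for s using F by (auto simp: replace_col_def)
  then show "continuous_on S (\<lambda>s. (F + s \<cdot>\<^sub>m 1\<^sub>m n) $$ (i, j))"
    and "continuous_on S (\<lambda>s. replace_col (F + s \<cdot>\<^sub>m 1\<^sub>m n) b k $$ (i, j))"
    by (cases "j = k"; auto intro!: continuous_intros)+
qed

lemma Z_matrix_solution_min:
  fixes G :: "real mat" and x :: "real vec"
  assumes G: "G \<in> carrier_mat n n" "Z_matrix G"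
    and x: "x \<in> carrier_vec n" "G *\<^sub>v x = vec n (\<lambda>_. 1)"
    and k: "k < n" "\<And>j. j < n \<Longrightarrow> x $ k \<le> x $ j"
  shows "1 \<le> (\<Sum>j<n. G $$ (k, j)) * x $ k"
proof -
  have "1 = (\<Sum>j<n. G $$ (k, j) * x $ j)"
    using x k mult_mat_vec_index_sum[OF G(1) x(1) k(1)] by simp
  also have "\<dots> \<le> (\<Sum>j<n. G $$ (k, j) * x $ k)"
  proof (rule sum_mono)
    fix j assume "j \<in> {..<n}"
    then show "G $$ (k, j) * x $ j \<le> G $$ (k, j) * x $ k"
      using G k by (cases "j = k") (auto simp: Z_matrix_def intro: mult_left_mono_neg)
  qed
  also have "\<dots> = (\<Sum>j<n. G $$ (k, j)) * x $ k" by (simp add: sum_distrib_right)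
  finally show ?thesis .
qed

lemma Z_matrix_solution_pos:
  fixes F :: "real mat" and u :: "real vec"
  assumes F: "F \<in> carrier_mat n n" "Z_matrix F"
    and det: "\<And>s. s \<ge> 0 \<Longrightarrow> det (F + s \<cdot>\<^sub>m 1\<^sub>m n) \<noteq> 0"
    and u: "u \<in> carrier_vec n" "F *\<^sub>v u = vec n (\<lambda>_. 1)" and i: "i < n"
  shows "u $ i > 0"
proof -
  define G where "G s = F + s \<cdot>\<^sub>m 1\<^sub>m n" for s :: real
  define one where "one = vec n (\<lambda>_. 1 :: real)"
  define v where "v s k = det (replace_col (G s) one k) / det (G s)" for s k
  define m where "m s = Min ((\<lambda>k. v s k) ` {..<n})" for s
  have G: "G s \<in> carrier_mat n n" "Z_matrix (G s)" for s
    using F by (auto simp: G_def Z_matrix_def)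
  have m_le: "m s \<le> v s k" if "k < n" for s k unfolding m_def using that by auto
  have row_bound: "\<exists>k<n. 1 \<le> ((\<Sum>j<n. F $$ (k, j)) + s) * m s" if s: "s \<ge> 0" for s
  proof -
    obtain k where k: "k < n" "v s k = m s"
      unfolding m_def using i Min_in[of "(\<lambda>k. v s k) ` {..<n}"] by fastforce
    have "G s *\<^sub>v vec n (v s) = one"
      unfolding G_def v_def one_def by (rule cramer_solution) (use F det s in auto)
    then have "1 \<le> (\<Sum>j<n. G s $$ (k, j)) * m s"
      using Z_matrix_solution_min[OF G(1)[of s] G(2)[of s] _ _ k(1), of "vec n (v s)"] k m_le
      by (simp add: one_def)
    also have "(\<Sum>j<n. G s $$ (k, j)) = (\<Sum>j<n. F $$ (k, j)) + s"
      using F k by (simp add: G_def sum.distrib if_distrib[of "\<lambda>x. s * x"] cong: if_cong)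
    finally show ?thesis using k by blast
  qed
  define S where "S = 1 + (\<Sum>k<n. \<Sum>j<n. \<bar>F $$ (k, j)\<bar>)"
  have S: "S \<ge> 0" by (simp add: S_def sum_nonneg add_nonneg_nonneg)
  have "0 < (\<Sum>j<n. F $$ (k, j)) + S" if "k < n" for k
  proof -
    have "- (\<Sum>j<n. \<bar>F $$ (k, j)\<bar>) \<le> (\<Sum>j<n. F $$ (k, j))"
      by (simp add: sum_negf[symmetric] sum_mono)
    moreover have "(\<Sum>j<n. \<bar>F $$ (k, j)\<bar>) \<le> (\<Sum>k<n. \<Sum>j<n. \<bar>F $$ (k, j)\<bar>)"
      using that by (intro member_le_sum) (auto intro: sum_nonneg)
    ultimately show ?thesis unfolding S_def by linarith
  qed
  then have mS: "m S > 0"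
    using row_bound[OF S] by (meson leI mult_nonneg_nonpos less_imp_le not_one_le_zero order_trans)
  have cont: "continuous_on {0..S} m"
    unfolding m_def v_def G_def using i F det
    by (intro continuous_on_Min_image continuous_on_cramer_shift) (auto simp: one_def)
  have "m 0 > 0"
  proof (rule ccontr)
    assume "\<not> m 0 > 0"
    then obtain s where "0 \<le> s" "m s = 0" using IVT'[of m 0 0 S] mS cont S by force
    then show False using row_bound by force
  qed
  moreover have "G 0 = F" using F by (auto simp: G_def intro!: eq_matI)
  then have "u $ i = v 0 i"
    using cramer_lemma_mat[OF F(1) u(1) i] det[of 0] u(2) by (simp add: v_def one_def G_def)
  ultimately show ?thesis using m_le[OF i, of 0] by linarith
qed

lemma gamma_robust_iff_solution_le:
  fixes F :: "real mat" and w :: "real vec"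
  assumes F: "F \<in> carrier_mat n n" "Z_matrix F"
    and w: "w \<in> carrier_vec n" "F *\<^sub>v w = vec n (\<lambda>_. 1)" and \<gamma>: "\<gamma> > 0"
  shows "gamma_robust n F \<gamma> \<longleftrightarrow> hurwitz (- F) \<and> (\<forall>j<n. w $ j \<le> \<gamma>)"
proof
  assume robust: "gamma_robust n F \<gamma>"
  then have "\<bar>w $ j\<bar> \<le> \<gamma>" if "j < n" for j
    using gamma_robust_imp_solution_le[OF F(1) w robust _ that] \<gamma> by simp
  with robust show "hurwitz (- F) \<and> (\<forall>j<n. w $ j \<le> \<gamma>)"
    unfolding gamma_robust_def by (auto dest: abs_le_D1)
next
  assume *: "hurwitz (- F) \<and> (\<forall>j<n. w $ j \<le> \<gamma>)"
  then have "w $ j > 0" if "j < n" for j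
    using Z_matrix_solution_pos[OF F hurwitz_imp_det_shift_nonzero[OF F(1)] w that] by blast
  with * show "gamma_robust n F \<gamma>"
    by (intro gamma_robust_if_positive_solution_le[OF F _ w(1) _ w(2)]) auto
qed

lemma gamma_robust_isolated_node_iff:
  fixes F :: "real mat" and u :: "real vec"
  assumes F: "F \<in> carrier_mat n n" "Z_matrix F" and hurwitz_F: "hurwitz (- F)"
    and u: "u \<in> carrier_vec n" "F *\<^sub>v u = vec n (\<lambda>_. 1)" and a: "a > 0" and \<gamma>: "\<gamma> > 0"
  shows "gamma_robust (n + 1) (four_block_mat F (0\<^sub>m n 1) (0\<^sub>m 1 n) (mat 1 1 (\<lambda>_. a))) \<gamma>
    \<longleftrightarrow> (\<forall>j<n. u $ j \<le> \<gamma>) \<and> 1 / a \<le> \<gamma>"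
proof -
  define Fb where "Fb = four_block_mat F (0\<^sub>m n 1) (0\<^sub>m 1 n) (mat 1 1 (\<lambda>_. a))"
  define ub where "ub = u @\<^sub>v vec 1 (\<lambda>_. 1 / a)"
  have Fb: "Fb \<in> carrier_mat (n + 1) (n + 1)" "Z_matrix Fb"
    using F by (auto simp: Fb_def Z_matrix_def)
  have ub: "ub \<in> carrier_vec (n + 1)"
    unfolding ub_def using u(1) by (intro carrier_vecI) (simp add: carrier_vecD)
  have "- Fb = four_block_mat (- F) (0\<^sub>m n 1) (0\<^sub>m 1 n) (mat 1 1 (\<lambda>_. - a))"
    using F by (auto simp: Fb_def intro!: eq_matI)
  then have "hurwitz (- Fb)"
    using F hurwitz_F hurwitz_1x1[of "- a"] a by (auto intro!: hurwitz_four_block_diag)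
  moreover have "Fb *\<^sub>v ub = vec (n + 1) (\<lambda>_. 1)"
    using F u a by (auto simp: Fb_def ub_def mult_mat_vec_split scalar_prod_def intro!: eq_vecI)
  ultimately show ?thesis
    unfolding Fb_def[symmetric] using gamma_robust_iff_solution_le[OF Fb ub _ \<gamma>] u(1)
    by (auto simp: ub_def less_Suc_eq)
qed

theorem mainTheorem6:
  fixes N :: nat and a :: "nat \<Rightarrow> real" and M :: "real mat"
    and \<gamma> aN1 :: real and u :: "real vec"
  assumes N: "N \<ge> 1"
    and a_pos: "\<forall>i<N. a i > 0"
    and M_dim: "M \<in> carrier_mat N N"
    and M_diag: "\<forall>i<N. M $$ (i, i) = 0"
    and M_nonneg: "\<forall>i<N. \<forall>j<N. M $$ (i, j) \<ge> 0"
    and \<gamma>_pos: "\<gamma> > 0"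
    and robust: "gamma_robust N (mat_diag N a - M) \<gamma>"
    and u_dim: "u \<in> carrier_vec N"
    and u_def: "(mat_diag N a - M) *\<^sub>v u = vec N (\<lambda>_. 1)"
    and aN1_pos: "aN1 > 0"
  shows "scalable N (mat_diag N a - M) (N + 1)
           (four_block_mat (mat_diag N a) (0\<^sub>m N 1) (0\<^sub>m 1 N) (mat 1 1 (\<lambda>_. aN1))
            - four_block_mat M (0\<^sub>m N 1) (0\<^sub>m 1 N) (0\<^sub>m 1 1))
         \<longleftrightarrow> aN1 \<ge> 1 / Max {u $ i | i. i < N}"
proof -
  define F where "F = mat_diag N a - M"
  define U where "U = Max {u $ i | i. i < N}"
  have F: "F \<in> carrier_mat N N" "Z_matrix F"
    using M_dim M_nonneg by (auto simp: F_def Z_matrix_def mat_diag_def)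
  have Fu: "F *\<^sub>v u = vec N (\<lambda>_. 1)" using u_def by (simp add: F_def)
  have hurwitz_F: "hurwitz (- F)" using robust by (simp add: F_def gamma_robust_def)
  have u_le_iff: "(\<forall>i<N. u $ i \<le> \<gamma>) \<longleftrightarrow> U \<le> \<gamma>" for \<gamma>
  proof -
    have "{u $ i | i. i < N} = (\<lambda>i. u $ i) ` {..<N}" by auto
    then show ?thesis using N unfolding U_def by (subst Max_le_iff) force+
  qed
  have "0 < u $ 0"
    using Z_matrix_solution_pos[OF F hurwitz_imp_det_shift_nonzero[OF F(1) hurwitz_F] u_dim Fu] N
    by simp
  also have "u $ 0 \<le> U" using u_le_iff[of U] N by simp
  finally have U_pos: "U > 0" .
  have "scalable N F (N + 1) (four_block_mat F (0\<^sub>m N 1) (0\<^sub>m 1 N) (mat 1 1 (\<lambda>_. aN1)))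
      \<longleftrightarrow> (\<forall>\<gamma>>0. U \<le> \<gamma> \<longrightarrow> 1 / aN1 \<le> \<gamma>)"
    using gamma_robust_iff_solution_le[OF F u_dim Fu] hurwitz_F
      gamma_robust_isolated_node_iff[OF F hurwitz_F u_dim Fu aN1_pos]
    by (simp add: scalable_def u_le_iff)
  also have "\<dots> \<longleftrightarrow> 1 / aN1 \<le> U"
    using U_pos by (meson order.trans order_refl)
  also have "\<dots> \<longleftrightarrow> 1 / U \<le> aN1"
    using U_pos aN1_pos by (simp add: field_simps)
  also have "four_block_mat F (0\<^sub>m N 1) (0\<^sub>m 1 N) (mat 1 1 (\<lambda>_. aN1))
      = four_block_mat (mat_diag N a) (0\<^sub>m N 1) (0\<^sub>m 1 N) (mat 1 1 (\<lambda>_. aN1))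
        - four_block_mat M (0\<^sub>m N 1) (0\<^sub>m 1 N) (0\<^sub>m 1 1)"
    using M_dim by (auto simp: F_def mat_diag_def intro!: eq_matI)
  finally show ?thesis by (simp only: F_def U_def)
qed

end
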